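(* Let $G=(N,E)$ be a finite DAG with influential set $S^{inf.}(G)=\{s_1,\dots,s_m\}$. Then there is a directed path in $G$ passing through all agents of $S^{inf.}(G)$ in increasing order of their progeny, i.e. visiting $s_m,s_{m-1},\dots,s_1$ in this order. In particular, for all $1\le i<j\le m$, there is a directed path from $s_j$ to $s_i$, i.e. $s_j\in P_{s_i}$.
   Context: In a DAG $G=(N,E)$ with $N=\{1,\dots,n\}$, $P_i$ is the set of nodes having a directed path to $i$ (including $i$), and $p_i=|P_i|$. Write $p_i\succ p_j$ if $p_i>p_j$, or $p_i=p_j$ and $i<j$. Node $i$ is influential if, in the graph obtained from $G$ by deleting all out-edges of $i$, $p_i\succ p_j$ holds for all $j\ne i$ (progeny measured in that modified graph). The influential set $S^{inf.}(G)=\{s_1,\dots,s_m\}$ consists of all influential nodes, indexed so that $p_{s_1}\succ p_{s_2}\succ\cdots\succ p_{s_m}$, with progeny measured in $G$. *)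

theory Defs
  imports Main
begin

text \<open>A graph on nodes N = {1..n} is given by an edge relation E \<subseteq> N \<times> N;
  (a,b) \<in> E is the directed edge a \<rightarrow> b.  It is a DAG iff acyclic E.\<close>

definition progeny_set :: "(nat \<times> nat) set \<Rightarrow> nat \<Rightarrow> nat \<Rightarrow> nat set" where
  "progeny_set E n i = {j \<in> {1..n}. (j, i) \<in> E\<^sup>*}"

definition progeny :: "(nat \<times> nat) set \<Rightarrow> nat \<Rightarrow> nat \<Rightarrow> nat" where
  "progeny E n i = card (progeny_set E n i)"

definition prog_succ :: "(nat \<times> nat) set \<Rightarrow> nat \<Rightarrow> nat \<Rightarrow> nat \<Rightarrow> bool" where
  "prog_succ E n i j \<longleftrightarrow> progeny E n i > progeny E n j \<or>
     (progeny E n i = progeny E n j \<and> i < j)"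

definition delete_out_edges :: "(nat \<times> nat) set \<Rightarrow> nat \<Rightarrow> (nat \<times> nat) set" where
  "delete_out_edges E i = {(a, b) \<in> E. a \<noteq> i}"

definition influential :: "(nat \<times> nat) set \<Rightarrow> nat \<Rightarrow> nat \<Rightarrow> bool" where
  "influential E n i \<longleftrightarrow> i \<in> {1..n} \<and>
     (\<forall>j \<in> {1..n}. j \<noteq> i \<longrightarrow> prog_succ (delete_out_edges E i) n i j)"

definition is_dpath :: "(nat \<times> nat) set \<Rightarrow> nat list \<Rightarrow> bool" where
  "is_dpath E xs \<longleftrightarrow> distinct xs \<and> (\<forall>k. Suc k < length xs \<longrightarrow> (xs ! k, xs ! Suc k) \<in> E)"

end

theory Submission
  imports Defs "HOL-Library.Product_Lexorder"
begin

text \<open>If \<open>a \<succ> b\<close> are both influential but \<open>b\<close> does not reach \<open>a\<close>, then deleting the out-edges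
  of \<open>b\<close> changes neither \<open>p\<^sub>a\<close> nor \<open>p\<^sub>b\<close>, so influence of \<open>b\<close> would give \<open>b \<succ> a\<close>.
  Hence along the order \<open>\<succ>\<close> each influential node reaches the next larger one; gluing these
  paths gives a walk through all of them, which is a path since \<open>G\<close> is acyclic, and it visits
  the influential nodes in increasing order because a later node can never reach an earlier one.\<close>

abbreviation walk :: "('a \<times> 'a) set \<Rightarrow> 'a list \<Rightarrow> bool" where
  "walk E xs \<equiv> successively (\<lambda>x y. (x, y) \<in> E) xs"

lemma walk_nth_trancl:
  assumes "walk E xs" "i < j" "j < length xs"
  shows "(xs ! i, xs ! j) \<in> E\<^sup>+"
  using assms(2,3)
proof (induction j)
  case (Suc j)
  have "(xs ! j, xs ! Suc j) \<in> E"
    using successively_nth[OF assms(1) Suc.prems(2)] .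
  with Suc show ?case
    by (cases "i = j") (auto intro: trancl_into_trancl)
qed simp

lemma distinct_walk_if_acyclic:
  assumes "acyclic E" "walk E xs"
  shows "distinct xs"
  unfolding distinct_conv_nth
proof (intro allI impI)
  fix i j assume "i < length xs" "j < length xs" "i \<noteq> j"
  with assms show "xs ! i \<noteq> xs ! j"
    by (cases i j rule: linorder_cases) (auto dest: walk_nth_trancl simp: acyclic_def)
qed

lemma is_dpath_iff_distinct_walk: "is_dpath E xs \<longleftrightarrow> distinct xs \<and> walk E xs"
  unfolding is_dpath_def successively_conv_nth ..

lemma walk_order_if_trancl:
  assumes "acyclic E" "walk E xs" "(b, a) \<in> E\<^sup>+" "a \<in> set xs" "b \<in> set xs"
  shows "\<exists>k l. k < l \<and> l < length xs \<and> xs ! k = b \<and> xs ! l = a"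
proof -
  obtain k l where k: "k < length xs" "xs ! k = b" and l: "l < length xs" "xs ! l = a"
    using assms(4,5) by (metis in_set_conv_nth)
  have "a \<noteq> b"
    using assms(1,3) by (auto simp: acyclic_def)
  moreover have "\<not> l < k"
  proof
    assume "l < k"
    then have "(a, b) \<in> E\<^sup>+"
      using walk_nth_trancl[OF assms(2) \<open>l < k\<close> k(1)] k l by simp
    with assms(1,3) show False
      unfolding acyclic_def by (meson trancl_trans)
  qed
  ultimately show ?thesis
    using k l by (metis linorder_neqE_nat)
qed

lemma walk_prepend_rtrancl:
  assumes "(u, v) \<in> E\<^sup>*" "walk E xs" "xs \<noteq> []" "hd xs = v"
  shows "\<exists>ys. walk E (ys @ xs) \<and> hd (ys @ xs) = u \<and> set ys \<subseteq> Domain E"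
  using assms(1)
proof (induction rule: converse_rtrancl_induct)
  case base
  show ?case
    using assms(2-4) by (intro exI[of _ "[]"]) simp
next
  case (step u u')
  then obtain ys where "walk E (ys @ xs)" "hd (ys @ xs) = u'" "set ys \<subseteq> Domain E"
    by blast
  with step.hyps(1) assms(3) show ?case
    by (intro exI[of _ "u # ys"]) (auto simp: successively_Cons)
qed

lemma walk_through_rtrancl_chain:
  assumes "walk (E\<^sup>*) zs"
  shows "\<exists>xs. walk E xs \<and> hd xs = hd zs \<and> set zs \<subseteq> set xs \<and> set xs \<subseteq> set zs \<union> Domain E"
  using assms
proof (induction zs)
  case Nil
  show ?case by (intro exI[of _ "[]"]) simp
next
  case (Cons z zs)
  show ?case
  proof (cases "zs = []")
    case True
    then show ?thesis by (intro exI[of _ "[z]"]) simp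
  next
    case False
    with Cons obtain xs where xs: "walk E xs" "hd xs = hd zs" "set zs \<subseteq> set xs"
      "set xs \<subseteq> set zs \<union> Domain E" and "(z, hd zs) \<in> E\<^sup>*"
      by (auto simp: successively_Cons)
    moreover have "xs \<noteq> []"
      using xs(3) False by auto
    ultimately obtain ys where "walk E (ys @ xs)" "hd (ys @ xs) = z" "set ys \<subseteq> Domain E"
      using walk_prepend_rtrancl by metis
    moreover have "z \<in> set (ys @ xs)"
      using hd_in_set[of "ys @ xs"] \<open>xs \<noteq> []\<close> \<open>hd (ys @ xs) = z\<close> by simp
    ultimately show ?thesis
      using xs(3,4) by (intro exI[of _ "ys @ xs"]) auto
  qed
qed

lemma rtrancl_delete_out_edges_iff:
  assumes "a = b \<or> (b, a) \<notin> E\<^sup>*"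
  shows "(j, a) \<in> (delete_out_edges E b)\<^sup>* \<longleftrightarrow> (j, a) \<in> E\<^sup>*"
proof
  show "(j, a) \<in> (delete_out_edges E b)\<^sup>* \<Longrightarrow> (j, a) \<in> E\<^sup>*"
    using rtrancl_mono[of "delete_out_edges E b" E] by (auto simp: delete_out_edges_def)
next
  show "(j, a) \<in> E\<^sup>* \<Longrightarrow> (j, a) \<in> (delete_out_edges E b)\<^sup>*"
  proof (induction rule: converse_rtrancl_induct)
    case (step y z)
    show ?case
    proof (cases "y = b")
      case True
      with step.hyps assms show ?thesis
        by (auto intro: converse_rtrancl_into_rtrancl)
    next
      case False
      with step show ?thesis
        by (auto simp: delete_out_edges_def intro: converse_rtrancl_into_rtrancl)
    qed
  qed simp
qed

lemma progeny_delete_out_edges: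
  assumes "a = b \<or> (b, a) \<notin> E\<^sup>*"
  shows "progeny (delete_out_edges E b) n a = progeny E n a"
  using rtrancl_delete_out_edges_iff[OF assms] by (simp add: progeny_def progeny_set_def)

lemma influential_reaches:
  assumes "influential E n a" "influential E n b" "a \<noteq> b" "prog_succ E n a b"
  shows "(b, a) \<in> E\<^sup>*"
proof (rule ccontr)
  assume "(b, a) \<notin> E\<^sup>*"
  then have "progeny (delete_out_edges E b) n a = progeny E n a"
    and "progeny (delete_out_edges E b) n b = progeny E n b"
    by (simp_all add: progeny_delete_out_edges)
  moreover have "prog_succ (delete_out_edges E b) n b a"
    using assms(1-3) by (simp add: influential_def)
  ultimately have "prog_succ E n b a"
    by (simp add: prog_succ_def)
  with assms(4) show False
    by (auto simp: prog_succ_def)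
qed

definition prog_rank :: "(nat \<times> nat) set \<Rightarrow> nat \<Rightarrow> nat \<Rightarrow> nat \<times> int" where
  "prog_rank E n s = (progeny E n s, - int s)"

lemma prog_succ_iff_prog_rank_less: "prog_succ E n a b \<longleftrightarrow> prog_rank E n b < prog_rank E n a"
  by (auto simp: prog_succ_def prog_rank_def less_prod_def)

lemma inj_prog_rank: "inj (prog_rank E n)"
  by (auto intro: injI simp: prog_rank_def)

lemma sorted_list_by_key_exists:
  fixes f :: "'a \<Rightarrow> 'b::linorder"
  assumes "finite A" "inj_on f A"
  obtains xs where "set xs = A" "sorted_wrt (\<lambda>x y. f x < f y) xs"
proof -
  interpret folding_insort_key "(\<le>)" "(<)" A f
    by unfold_locales (fact assms(2))
  show ?thesis
    using that finite_set_strict_sorted[OF order_refl assms(1)] by (auto simp: sorted_wrt_map)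
qed

lemma influential_rtrancl_chain:
  obtains zs where "set zs = {s. influential E n s}" "walk (E\<^sup>*) zs"
proof -
  have "finite {s. influential E n s}"
    by (rule finite_subset[of _ "{1..n}"]) (auto simp: influential_def)
  then obtain zs where zs: "set zs = {s. influential E n s}"
    and sorted: "sorted_wrt (\<lambda>x y. prog_rank E n x < prog_rank E n y) zs"
    using sorted_list_by_key_exists[OF _ inj_on_subset[OF inj_prog_rank]] by blast
  from sorted have "successively (\<lambda>x y. prog_rank E n x < prog_rank E n y) zs"
    by (rule successively_if_sorted_wrt)
  then have "walk (E\<^sup>*) zs"
    by (rule successively_mono)
      (use zs in \<open>auto intro: influential_reaches simp: prog_succ_iff_prog_rank_less\<close>)
  with zs that show ?thesis
    by blast
qed

theorem mainTheorem4:
  fixes n :: nat and E :: "(nat \<times> nat) set"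
  assumes "E \<subseteq> {1..n} \<times> {1..n}"
    and "acyclic E"
  shows "(\<exists>xs. is_dpath E xs \<and> set xs \<subseteq> {1..n}
            \<and> (\<forall>s. influential E n s \<longrightarrow> s \<in> set xs)
            \<and> (\<forall>a b. influential E n a \<and> influential E n b \<and> a \<noteq> b \<and> prog_succ E n a b
                 \<longrightarrow> (\<exists>k l. k < l \<and> l < length xs \<and> xs ! k = b \<and> xs ! l = a)))
    \<and> (\<forall>a b. influential E n a \<and> influential E n b \<and> a \<noteq> b \<and> prog_succ E n a b
                 \<longrightarrow> b \<in> progeny_set E n a)"
proof -
  obtain zs where zs: "set zs = {s. influential E n s}" "walk (E\<^sup>*) zs"
    by (rule influential_rtrancl_chain)
  then obtain xs where xs: "walk E xs" "set zs \<subseteq> set xs" "set xs \<subseteq> set zs \<union> Domain E"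
    using walk_through_rtrancl_chain by blast
  have "is_dpath E xs"
    using xs(1) assms(2) by (simp add: is_dpath_iff_distinct_walk distinct_walk_if_acyclic)
  moreover have "set xs \<subseteq> {1..n}"
    using xs(3) zs(1) assms(1) by (auto simp: influential_def)
  moreover have "b \<in> progeny_set E n a" and "\<exists>k l. k < l \<and> l < length xs \<and> xs ! k = b \<and> xs ! l = a"
    if "influential E n a" "influential E n b" "a \<noteq> b" "prog_succ E n a b" for a b
  proof -
    have "(b, a) \<in> E\<^sup>*"
      using influential_reaches[OF that] .
    then show "b \<in> progeny_set E n a"
      using that(2) by (simp add: progeny_set_def influential_def)
    from \<open>(b, a) \<in> E\<^sup>*\<close> have "(b, a) \<in> E\<^sup>+"
      using that(3) by (simp add: rtrancl_eq_or_trancl)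
    with that(1,2) show "\<exists>k l. k < l \<and> l < length xs \<and> xs ! k = b \<and> xs ! l = a"
      using walk_order_if_trancl[OF assms(2) xs(1)] zs(1) xs(2) by blast
  qed
  moreover have "s \<in> set xs" if "influential E n s" for s
    using that zs(1) xs(2) by blast
  ultimately show ?thesis
    by blast
qed

end
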